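(* Let $P$ be an ergodic and reversible transition matrix on a finite set $\mathcal{X}$. Then $\gamma_{\mathsf{dps}}=\gamma_\star$.
   Context: $P$ is row-stochastic, ergodic (primitive), with unique stationary distribution $\pi>0$, and reversible: $\pi(x)P(x,x')=\pi(x')P(x',x)$; then $P$ has real spectrum and $\gamma_\star=1-\max\{|\lambda|:\lambda\in\sigma(P),\lambda\ne1\}$ is its absolute spectral gap. $P^\star(x,x')=\pi(x')P(x',x)/\pi(x)$; for a transition matrix $Q$ with stationary $\pi$, $\mathscr{S}_\pi(Q)=\begin{pmatrix}0&Q\\Q^\star&0\end{pmatrix}$ and $\gamma_\ddagger(Q)=1-\mu_2$ where $\mu_2$ is the second largest eigenvalue (counted with multiplicity) of $\mathscr{S}_\pi(Q)$. $\gamma_{\mathsf{dps}}=\max_{k\ge1}\gamma_\ddagger(P^k)/k$. *)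

theory Defs
  imports "Jordan_Normal_Form.Char_Poly" "HOL-Computational_Algebra.Polynomial"
begin

(* State space X = {0..<n}; transition matrices are n x n real matrices. *)

definition row_stochastic :: "nat \<Rightarrow> real mat \<Rightarrow> bool" where
  "row_stochastic n P \<longleftrightarrow> P \<in> carrier_mat n n \<and>
     (\<forall>i<n. \<forall>j<n. P $$ (i,j) \<ge> 0) \<and> (\<forall>i<n. (\<Sum>j<n. P $$ (i,j)) = 1)"

(* ergodic = primitive: some power has all entries strictly positive *)
definition primitive_mat :: "nat \<Rightarrow> real mat \<Rightarrow> bool" where
  "primitive_mat n P \<longleftrightarrow> (\<exists>k>0. \<forall>i<n. \<forall>j<n. (P ^\<^sub>m k) $$ (i,j) > 0)"

definition stationary_dist :: "nat \<Rightarrow> real mat \<Rightarrow> (nat \<Rightarrow> real) \<Rightarrow> bool" where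
  "stationary_dist n P \<pi> \<longleftrightarrow> (\<forall>i<n. \<pi> i \<ge> 0) \<and> (\<Sum>i<n. \<pi> i) = 1 \<and>
     (\<forall>j<n. (\<Sum>i<n. \<pi> i * P $$ (i,j)) = \<pi> j)"

definition reversible :: "nat \<Rightarrow> real mat \<Rightarrow> (nat \<Rightarrow> real) \<Rightarrow> bool" where
  "reversible n P \<pi> \<longleftrightarrow> (\<forall>i<n. \<forall>j<n. \<pi> i * P $$ (i,j) = \<pi> j * P $$ (j,i))"

definition time_reversal :: "nat \<Rightarrow> (nat \<Rightarrow> real) \<Rightarrow> real mat \<Rightarrow> real mat" where
  "time_reversal n \<pi> Q = mat n n (\<lambda>(i,j). \<pi> j * Q $$ (j,i) / \<pi> i)"

definition dilation :: "nat \<Rightarrow> (nat \<Rightarrow> real) \<Rightarrow> real mat \<Rightarrow> real mat" where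
  "dilation n \<pi> Q = four_block_mat (0\<^sub>m n n) Q (time_reversal n \<pi> Q) (0\<^sub>m n n)"

definition spec :: "real mat \<Rightarrow> complex set" where
  "spec A = {z. eigenvalue (map_mat complex_of_real A) z}"

definition abs_spectral_gap :: "real mat \<Rightarrow> real" where
  "abs_spectral_gap P = 1 - Max {cmod z | z. z \<in> spec P \<and> z \<noteq> 1}"

definition eigenvalues_desc :: "real mat \<Rightarrow> real list" where
  "eigenvalues_desc A = rev (sorted_list_of_multiset (proots (char_poly A)))"

definition second_eigenvalue :: "real mat \<Rightarrow> real" where
  "second_eigenvalue A = eigenvalues_desc A ! 1"

definition gamma_ddagger :: "nat \<Rightarrow> (nat \<Rightarrow> real) \<Rightarrow> real mat \<Rightarrow> real" where
  "gamma_ddagger n \<pi> Q = 1 - second_eigenvalue (dilation n \<pi> Q)"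

(* gamma_dps = max_{k>=1} gamma_ddagger(P^k)/k, written as a supremum *)
definition gamma_dps :: "nat \<Rightarrow> (nat \<Rightarrow> real) \<Rightarrow> real mat \<Rightarrow> real" where
  "gamma_dps n \<pi> P = (SUP k\<in>{1..}. gamma_ddagger n \<pi> (P ^\<^sub>m k) / real k)"

end

theory Submission
  imports Defs "Jordan_Normal_Form.Schur_Decomposition"
begin

text \<open>
  A reversible \<open>P\<close> is self-adjoint in \<open>\<ell>\<^sup>2(\<pi>)\<close>, so its spectrum is real and
  \<open>P\<^sup>\<star> = P\<close>; hence \<open>\<S>\<^sub>\<pi>(P\<^sup>k)\<close> is similar to \<open>diag(P\<^sup>k, -P\<^sup>k)\<close> and its eigenvalues
  are \<open>\<plusminus>\<lambda>\<^sup>k\<close> for the eigenvalues \<open>\<lambda>\<close> of \<open>P\<close>. Ergodicity makes the eigenvalue \<open>1\<close>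
  simple (a maximum principle for harmonic functions, plus the absence of Jordan chains
  for self-adjoint operators), so the second largest eigenvalue of \<open>\<S>\<^sub>\<pi>(P\<^sup>k)\<close> is
  \<open>r\<^sup>k\<close> with \<open>r = 1 - \<gamma>\<^sub>\<star>\<close>. Finally \<open>(1 - r\<^sup>k)/k \<le> 1 - r\<close> by Bernoulli's inequality,
  with equality at \<open>k = 1\<close>.
\<close>

lemma index_mult_mat_sum:
  fixes A B :: "'a::comm_semiring_1 mat"
  assumes "A \<in> carrier_mat n n" "B \<in> carrier_mat n n" "i < n" "j < n"
  shows "(A * B) $$ (i,j) = (\<Sum>l<n. A $$ (i,l) * B $$ (l,j))"
  using assms by (simp add: scalar_prod_def atLeast0LessThan)

lemma index_mult_mat_vec_sum:
  fixes A :: "'a::comm_semiring_1 mat"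
  assumes "A \<in> carrier_mat n n" "v \<in> carrier_vec n" "i < n"
  shows "(A *\<^sub>v v) $ i = (\<Sum>l<n. A $$ (i,l) * v $ l)"
  using assms by (simp add: scalar_prod_def atLeast0LessThan)

lemma eigenvector_eq_sum:
  fixes A :: "'a::comm_ring_1 mat"
  assumes "A \<in> carrier_mat n n" "eigenvector A v z" "i < n"
  shows "(\<Sum>j<n. A $$ (i,j) * v $ j) = z * v $ i"
proof -
  have "v \<in> carrier_vec n" "A *\<^sub>v v = z \<cdot>\<^sub>v v"
    using assms(1,2) unfolding eigenvector_def by auto
  then show ?thesis
    using arg_cong[of _ _ "\<lambda>w. w $ i"] index_mult_mat_vec_sum[OF assms(1) _ assms(3)] assms(3)
    by fastforce
qed

lemma eigenvector_nonzero_entry: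
  assumes "A \<in> carrier_mat n n" "eigenvector A v z"
  obtains i where "i < n" "v $ i \<noteq> 0"
  using assms unfolding eigenvector_def by force

lemma eigenvalue_iff_mem_roots:
  fixes A :: "'a::field mat"
  assumes "A \<in> carrier_mat n n" "char_poly A = (\<Prod>r\<leftarrow>rs. [:-r,1:])"
  shows "eigenvalue A r \<longleftrightarrow> r \<in> set rs"
  by (simp add: eigenvalue_root_char_poly[OF assms(1)] assms(2) poly_prod_list_zero_iff)

lemma left_inverse_nonzero_column:
  fixes W W' :: "'a::comm_semiring_1 mat"
  assumes W: "W \<in> carrier_mat n n" and W': "W' \<in> carrier_mat n n" and inv: "W' * W = 1\<^sub>m n"
    and j: "j < n"
  obtains l where "l < n" "W $$ (l,j) \<noteq> 0"
proof (rule ccontr)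
  assume "\<not> thesis"
  then have "\<forall>l<n. W $$ (l,j) = 0" using that by blast
  then have "(\<Sum>l<n. W' $$ (j,l) * W $$ (l,j)) = 0" by simp
  then show False using index_mult_mat_sum[OF W' W j j] inv j by simp
qed

lemma left_inverse_const_columns:
  fixes W W' :: "'a::field mat"
  assumes W: "W \<in> carrier_mat n n" and W': "W' \<in> carrier_mat n n" and inv: "W' * W = 1\<^sub>m n"
    and ij: "i < n" "j < n" "i \<noteq> j"
    and ci: "\<forall>l<n. W $$ (l,i) = a" and cj: "\<forall>l<n. W $$ (l,j) = b"
  shows False
proof -
  have col: "(\<Sum>l<n. W' $$ (p,l)) * c = (1\<^sub>m n) $$ (p,q)"
    if "p < n" "q < n" "\<forall>l<n. W $$ (l,q) = c" for p q c
    using index_mult_mat_sum[OF W' W that(1,2)] that by (simp add: inv sum_distrib_right)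
  have "b = 0" using col[OF ij(1,1) ci] col[OF ij(1,2) cj] ij by auto
  then show False using col[OF ij(2,2) cj] ij(2) by simp
qed

lemma pow_mat_Suc_left:
  fixes P :: "'a::semiring_1 mat"
  assumes P: "P \<in> carrier_mat n n"
  shows "P ^\<^sub>m Suc k = P * P ^\<^sub>m k"
proof (induction k)
  case (Suc k)
  have "P ^\<^sub>m Suc (Suc k) = (P * P ^\<^sub>m k) * P" using Suc by simp
  also have "\<dots> = P * (P ^\<^sub>m k * P)" using P by (simp add: assoc_mult_mat[of _ n n _ n _ n])
  finally show ?case by simp
qed (use P in simp)

lemma upper_triangular_column_sum:
  fixes T :: "'a::semiring_0 mat"
  assumes T: "T \<in> carrier_mat n n" and ut: "upper_triangular T" and c: "c < n"
  shows "(\<Sum>l<n. f l * T $$ (l,c)) = (\<Sum>l\<le>c. f l * T $$ (l,c))"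
proof (rule sum.mono_neutral_right)
  show "\<forall>l\<in>{..<n} - {..c}. f l * T $$ (l,c) = 0" using upper_triangularD[OF ut] T by auto
qed (use c in auto)

lemma upper_triangular_mult:
  fixes A B :: "'a::comm_semiring_1 mat"
  assumes A: "A \<in> carrier_mat n n" and B: "B \<in> carrier_mat n n"
    and utA: "upper_triangular A" and utB: "upper_triangular B"
  shows "upper_triangular (A * B)" and "diag_mat (A * B) = map2 (*) (diag_mat A) (diag_mat B)"
proof -
  have zero: "A $$ (i,l) * B $$ (l,j) = 0" if "l < i \<or> j < l" "i < n" "j < n" "l < n" for i j l
    using that upper_triangularD[OF utA, of l i] upper_triangularD[OF utB, of j l] A B by auto
  show "upper_triangular (A * B)"
  proof (rule upper_triangularI)
    fix i j assume ij: "j < i" "i < dim_row (A * B)"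
    then have "(A * B) $$ (i,j) = (\<Sum>l<n. A $$ (i,l) * B $$ (l,j))"
      using A by (intro index_mult_mat_sum[OF A B]) auto
    also have "\<dots> = 0" using ij A by (intro sum.neutral ballI zero) auto
    finally show "(A * B) $$ (i,j) = 0" .
  qed
  have "(A * B) $$ (i,i) = A $$ (i,i) * B $$ (i,i)" if i: "i < n" for i
  proof -
    have "(A * B) $$ (i,i) = (\<Sum>l<n. if l = i then A $$ (i,i) * B $$ (i,i) else 0)"
      unfolding index_mult_mat_sum[OF A B i i] using i by (intro sum.cong) (auto intro!: zero)
    then show ?thesis using i by simp
  qed
  then show "diag_mat (A * B) = map2 (*) (diag_mat A) (diag_mat B)"
    using A B by (intro nth_equalityI) (auto simp: diag_mat_def)
qed

lemma upper_triangular_power: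
  fixes A :: "'a::comm_semiring_1 mat"
  assumes A: "A \<in> carrier_mat n n" and ut: "upper_triangular A"
  shows "upper_triangular (A ^\<^sub>m k) \<and> diag_mat (A ^\<^sub>m k) = map (\<lambda>a. a ^ k) (diag_mat A)"
proof (induction k)
  case 0
  then show ?case using A by (auto simp: diag_mat_def intro!: nth_equalityI)
next
  case (Suc k)
  have Ak: "A ^\<^sub>m k \<in> carrier_mat n n" using A by simp
  have "diag_mat (A ^\<^sub>m Suc k) = map2 (*) (map (\<lambda>a. a ^ k) (diag_mat A)) (diag_mat A)"
    using upper_triangular_mult(2)[OF Ak A _ ut] Suc by simp
  also have "\<dots> = map (\<lambda>a. a ^ Suc k) (diag_mat A)"
    by (simp add: zip_map1 zip_same_conv_map o_def mult.commute)
  finally show ?case using upper_triangular_mult(1)[OF Ak A _ ut] Suc by simp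
qed

lemma schur_triangularization:
  fixes A :: "'a::conjugatable_ordered_field mat"
  assumes A: "A \<in> carrier_mat n n" and cp: "char_poly A = (\<Prod>a\<leftarrow>as. [:-a,1:])"
  obtains T W W' where "similar_mat_wit A T W W'" "upper_triangular T" "diag_mat T = as"
proof -
  obtain T W W' where "schur_decomposition A as = (T,W,W')"
    by (cases "schur_decomposition A as") auto
  from schur_decomposition[OF A cp this]
  have "similar_mat_wit A T W W'" "upper_triangular T" "diag_mat T = as" by auto
  then show ?thesis by (rule that)
qed

lemma char_poly_power:
  fixes P :: "'a::conjugatable_ordered_field mat"
  assumes P: "P \<in> carrier_mat n n" and cp: "char_poly P = (\<Prod>r\<leftarrow>rs. [:-r,1:])"
  shows "char_poly (P ^\<^sub>m k) = (\<Prod>r\<leftarrow>map (\<lambda>r. r ^ k) rs. [:-r,1:])"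
proof -
  obtain T W W' where w: "similar_mat_wit P T W W'" and ut: "upper_triangular T"
    and dg: "diag_mat T = rs" by (rule schur_triangularization[OF P cp])
  have T: "T \<in> carrier_mat n n" using similar_mat_witD2[OF P w] by auto
  have "similar_mat (P ^\<^sub>m k) (T ^\<^sub>m k)"
    using similar_mat_wit_pow[OF w] unfolding similar_mat_def by blast
  then have "char_poly (P ^\<^sub>m k) = char_poly (T ^\<^sub>m k)" by (rule char_poly_similar)
  also have "\<dots> = (\<Prod>a\<leftarrow>diag_mat (T ^\<^sub>m k). [:-a,1:])"
    using upper_triangular_power[OF T ut] T by (intro char_poly_upper_triangular) auto
  finally show ?thesis using upper_triangular_power[OF T ut] dg by (simp add: o_def)
qed

lemma proots_prod_linear: "proots (\<Prod>r\<leftarrow>rs. [:-r,1:]) = mset (rs :: 'a::idom list)"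
proof (induction rs)
  case (Cons r rs)
  have "(\<Prod>r\<leftarrow>rs. [:-r,1:]) \<noteq> 0" by (auto simp: prod_list_zero_iff)
  moreover have "[:-r,1:] \<noteq> 0" by simp
  ultimately show ?case using Cons by (simp add: proots_mult del: mult_pCons_left)
qed simp

lemma mset_obtain_two_copies:
  assumes "count (mset xs) a \<ge> 2"
  obtains ys where "mset (a # a # ys) = mset xs"
proof -
  have "{#a, a#} \<subseteq># mset xs" using assms by (simp add: subseteq_mset_def)
  from subset_mset.diff_add[OF this]
  have "mset xs = add_mset a (add_mset a (mset xs - {#a, a#}))" by simp
  moreover obtain ys where "mset ys = mset xs - {#a, a#}" using ex_mset by blast
  ultimately show ?thesis by (intro that[of ys]) simp
qed

subsection \<open>Harmonic functions\<close>

definition harmonic :: "nat \<Rightarrow> real mat \<Rightarrow> (nat \<Rightarrow> real) \<Rightarrow> bool" where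
  "harmonic n W f \<longleftrightarrow> (\<forall>i<n. (\<Sum>j<n. W $$ (i,j) * f j) = f i)"

lemma harmonic_mult:
  assumes "A \<in> carrier_mat n n" "B \<in> carrier_mat n n" "harmonic n A f" "harmonic n B f"
  shows "harmonic n (A * B) f"
  unfolding harmonic_def
proof (intro allI impI)
  fix i assume i: "i < n"
  have "(\<Sum>j<n. (A * B) $$ (i,j) * f j) = (\<Sum>j<n. \<Sum>l<n. A $$ (i,l) * B $$ (l,j) * f j)"
    using assms i
    by (intro sum.cong refl) (simp add: index_mult_mat_sum sum_distrib_right del: index_mult_mat)
  also have "\<dots> = (\<Sum>l<n. A $$ (i,l) * (\<Sum>j<n. B $$ (l,j) * f j))"
    by (subst sum.swap) (simp add: sum_distrib_left mult.assoc)
  also have "\<dots> = f i"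
    using assms(3,4) i unfolding harmonic_def by simp
  finally show "(\<Sum>j<n. (A * B) $$ (i,j) * f j) = f i" .
qed

lemma harmonic_one_mat: "harmonic n (1\<^sub>m n) f"
  unfolding harmonic_def
proof (intro allI impI)
  fix i assume i: "i < n"
  have "(\<Sum>j<n. (1\<^sub>m n :: real mat) $$ (i,j) * f j) = (\<Sum>j<n. if j = i then f j else 0)"
    using i by (intro sum.cong) auto
  also have "\<dots> = f i" using i by simp
  finally show "(\<Sum>j<n. (1\<^sub>m n :: real mat) $$ (i,j) * f j) = f i" .
qed

lemma harmonic_power:
  assumes "A \<in> carrier_mat n n" "harmonic n A f"
  shows "harmonic n (A ^\<^sub>m k) f"
  by (induction k) (use assms harmonic_one_mat harmonic_mult[of "A ^\<^sub>m _" n A f] in auto)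

text \<open>Maximum principle: evaluate the harmonicity equation at a maximiser of \<open>f\<close>.\<close>

lemma harmonic_const_if_positive:
  assumes pos: "\<forall>i<n. \<forall>j<n. W $$ (i,j) > 0"
    and one: "harmonic n W (\<lambda>_. 1)" and f: "harmonic n W f" and i: "i < n" and j: "j < n"
  shows "f i = f j"
proof -
  define m where "m = Max (f ` {..<n})"
  have "m \<in> f ` {..<n}" unfolding m_def using i by (intro Max_in) auto
  then obtain i0 where i0: "i0 < n" "f i0 = m" by auto
  have le: "f l \<le> m" if "l < n" for l unfolding m_def using that by auto
  have "(\<Sum>l<n. W $$ (i0,l) * (m - f l)) = m * (\<Sum>l<n. W $$ (i0,l)) - (\<Sum>l<n. W $$ (i0,l) * f l)"
    by (simp add: algebra_simps sum_subtractf sum_distrib_left)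
  also have "\<dots> = 0" using one f i0 unfolding harmonic_def by simp
  finally have "(\<Sum>l<n. W $$ (i0,l) * (m - f l)) = 0" .
  moreover have "\<forall>l\<in>{..<n}. 0 \<le> W $$ (i0,l) * (m - f l)"
    using le pos i0 by (auto intro!: mult_nonneg_nonneg simp: less_imp_le)
  ultimately have zero_terms: "\<forall>l\<in>{..<n}. W $$ (i0,l) * (m - f l) = 0"
    using sum_nonneg_eq_0_iff[of "{..<n}" "\<lambda>l. W $$ (i0,l) * (m - f l)"] by auto
  then have "f l = m" if "l < n" for l
  proof -
    have "W $$ (i0,l) * (m - f l) = 0" using zero_terms that by blast
    then show ?thesis using pos[rule_format, OF i0(1) that] by simp
  qed
  then show ?thesis using i j by simp
qed

lemma stochastic_harmonic_one: "row_stochastic n P \<Longrightarrow> harmonic n P (\<lambda>_. 1)"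
  unfolding row_stochastic_def harmonic_def by simp

lemma primitive_harmonic_const:
  assumes st: "row_stochastic n P" and pr: "primitive_mat n P" and f: "harmonic n P f"
    and "i < n" "j < n"
  shows "f i = f j"
proof -
  obtain k where k: "\<forall>i<n. \<forall>j<n. (P ^\<^sub>m k) $$ (i,j) > 0"
    using pr unfolding primitive_mat_def by auto
  have P: "P \<in> carrier_mat n n" using st unfolding row_stochastic_def by auto
  show ?thesis
    by (rule harmonic_const_if_positive[OF k harmonic_power[OF P stochastic_harmonic_one[OF st]]
          harmonic_power[OF P f] assms(4,5)])
qed

subsection \<open>Spectrum of a reversible stochastic matrix\<close>

text \<open>Self-adjointness of \<open>P\<close> for the weighted form \<open>\<langle>a, b\<rangle>\<^sub>\<pi> = \<Sum>\<^sub>i \<pi>\<^sub>i a\<^sub>i b\<^sub>i\<close>.\<close>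

lemma reversible_sum_symmetric:
  fixes a b :: "nat \<Rightarrow> 'a::real_field"
  assumes "reversible n P \<pi>"
  shows "(\<Sum>i<n. of_real (\<pi> i) * a i * (\<Sum>j<n. of_real (P $$ (i,j)) * b j))
       = (\<Sum>i<n. of_real (\<pi> i) * b i * (\<Sum>j<n. of_real (P $$ (i,j)) * a j))"
proof -
  have "(\<Sum>i<n. of_real (\<pi> i) * a i * (\<Sum>j<n. of_real (P $$ (i,j)) * b j))
      = (\<Sum>i<n. \<Sum>j<n. of_real (\<pi> i * P $$ (i,j)) * a i * b j)"
    by (simp add: sum_distrib_left mult_ac)
  also have "\<dots> = (\<Sum>i<n. \<Sum>j<n. of_real (\<pi> j * P $$ (j,i)) * a i * b j)"
    using assms unfolding reversible_def by (intro sum.cong refl) auto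
  also have "\<dots> = (\<Sum>j<n. \<Sum>i<n. of_real (\<pi> j * P $$ (j,i)) * a i * b j)"
    by (rule sum.swap)
  also have "\<dots> = (\<Sum>i<n. of_real (\<pi> i) * b i * (\<Sum>j<n. of_real (P $$ (i,j)) * a j))"
    by (simp add: sum_distrib_left mult_ac)
  finally show ?thesis .
qed

lemma reversible_eigenvalue_real:
  assumes rev: "reversible n P \<pi>" and pos: "\<forall>i<n. \<pi> i > 0" and P: "P \<in> carrier_mat n n"
    and ev: "eigenvector (map_mat complex_of_real P) v z"
  shows "Im z = 0"
proof -
  have Pc: "map_mat complex_of_real P \<in> carrier_mat n n" using P by simp
  obtain i1 where i1: "i1 < n" "v $ i1 \<noteq> 0" by (rule eigenvector_nonzero_entry[OF Pc ev])
  have eq: "(\<Sum>j<n. of_real (P $$ (i,j)) * v $ j) = z * v $ i" if "i < n" for i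
    using eigenvector_eq_sum[OF Pc ev that] that P by simp
  define s where "s = (\<Sum>i<n. of_real (\<pi> i) * cnj (v $ i) * (\<Sum>j<n. of_real (P $$ (i,j)) * v $ j))"
  define N where "N = (\<Sum>i<n. \<pi> i * (cmod (v $ i))\<^sup>2)"
  have "s = (\<Sum>i<n. of_real (\<pi> i) * v $ i * (\<Sum>j<n. of_real (P $$ (i,j)) * cnj (v $ j)))"
    unfolding s_def by (rule reversible_sum_symmetric[OF rev])
  also have "\<dots> = cnj s" unfolding s_def by (simp add: mult_ac)
  finally have "Im s = Im (cnj s)" by (rule arg_cong)
  then have "Im s = 0" by simp
  moreover have "s = z * of_real N"
  proof -
    have "s = (\<Sum>i<n. z * of_real (\<pi> i * (cmod (v $ i))\<^sup>2))"
      unfolding s_def using eq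
      by (intro sum.cong refl) (simp add: complex_norm_square[symmetric] mult_ac)
    then show ?thesis unfolding N_def by (simp add: sum_distrib_left)
  qed
  moreover have "N > 0" unfolding N_def
    by (rule sum_pos2[of "{..<n}" i1]) (use pos i1 in \<open>auto intro: less_imp_le\<close>)
  ultimately show ?thesis by simp
qed

lemma reversible_char_poly_splits:
  assumes rev: "reversible n P \<pi>" and pos: "\<forall>i<n. \<pi> i > 0" and P: "P \<in> carrier_mat n n"
  obtains rs where "char_poly P = (\<Prod>r\<leftarrow>rs. [:-r,1:])" "length rs = n"
proof -
  interpret of_real: map_poly_inj_idom_divide_hom "of_real :: real \<Rightarrow> complex" ..
  let ?Pc = "map_mat complex_of_real P"
  have Pc: "?Pc \<in> carrier_mat n n" using P by simp
  obtain as where as: "char_poly ?Pc = (\<Prod>a\<leftarrow>as. [:-a,1:])" "length as = n"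
    using char_poly_factorized[OF Pc] by auto
  have real: "Im a = 0" if "a \<in> set as" for a
  proof -
    have "eigenvalue ?Pc a" using eigenvalue_iff_mem_roots[OF Pc as(1)] that by simp
    then obtain v where "eigenvector ?Pc v a" unfolding eigenvalue_def by auto
    then show ?thesis by (rule reversible_eigenvalue_real[OF rev pos P])
  qed
  have "map_poly of_real (char_poly P) = char_poly ?Pc"
    by (rule of_real_hom.char_poly_hom[OF P, symmetric])
  also have "\<dots> = (\<Prod>r\<leftarrow>map Re as. [:- complex_of_real r,1:])"
    unfolding as(1) map_map o_def using real
    by (intro arg_cong[where f=prod_list] map_cong refl) (simp add: complex_eq_iff)
  also have "\<dots> = map_poly of_real (\<Prod>r\<leftarrow>map Re as. [:-r,1:])"
    by (simp add: of_real.hom_prod_list o_def)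
  finally have "char_poly P = (\<Prod>r\<leftarrow>map Re as. [:-r,1:])" by (rule of_real.injectivity)
  then show ?thesis using as(2) by (intro that[of "map Re as"]) auto
qed

lemma spec_eq_roots:
  assumes P: "P \<in> carrier_mat n n" and cp: "char_poly P = (\<Prod>r\<leftarrow>rs. [:-r,1:])"
  shows "spec P = complex_of_real ` set rs"
proof -
  interpret of_real: map_poly_inj_idom_divide_hom "of_real :: real \<Rightarrow> complex" ..
  let ?Pc = "map_mat complex_of_real P"
  have Pc: "?Pc \<in> carrier_mat n n" using P by simp
  have cp_complex: "char_poly ?Pc = (\<Prod>z\<leftarrow>map complex_of_real rs. [:-z,1:])"
    unfolding of_real_hom.char_poly_hom[OF P] cp by (simp add: of_real.hom_prod_list o_def)
  show ?thesis unfolding spec_def eigenvalue_iff_mem_roots[OF Pc cp_complex] by auto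
qed

lemma stochastic_eigenvalue_abs_le_1:
  assumes st: "row_stochastic n P" and "eigenvalue P r"
  shows "\<bar>r\<bar> \<le> 1"
proof -
  have P: "P \<in> carrier_mat n n" using st unfolding row_stochastic_def by auto
  obtain v where ev: "eigenvector P v r" using \<open>eigenvalue P r\<close> unfolding eigenvalue_def by blast
  obtain i1 where i1: "i1 < n" "v $ i1 \<noteq> 0" by (rule eigenvector_nonzero_entry[OF P ev])
  define m where "m = Max ((\<lambda>j. \<bar>v $ j\<bar>) ` {..<n})"
  have "m \<in> (\<lambda>j. \<bar>v $ j\<bar>) ` {..<n}" unfolding m_def using i1 by (intro Max_in) auto
  then obtain i0 where i0: "i0 < n" "\<bar>v $ i0\<bar> = m" by auto
  have le: "\<bar>v $ j\<bar> \<le> m" if "j < n" for j unfolding m_def using that by auto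
  have "m > 0" using le[OF i1(1)] i1 by linarith
  have "\<bar>r\<bar> * m = \<bar>\<Sum>j<n. P $$ (i0,j) * v $ j\<bar>"
    using eigenvector_eq_sum[OF P ev i0(1)] i0 by (simp add: abs_mult)
  also have "\<dots> \<le> (\<Sum>j<n. P $$ (i0,j) * m)"
    using st i0 le unfolding row_stochastic_def
    by (intro order_trans[OF sum_abs] sum_mono) (simp add: abs_mult mult_left_mono)
  also have "\<dots> = m"
    using st i0 unfolding row_stochastic_def by (simp add: sum_distrib_right[symmetric])
  finally show ?thesis using \<open>m > 0\<close> by simp
qed

lemma stochastic_eigenvalue_one:
  assumes st: "row_stochastic n P" and n: "n > 0"
  shows "eigenvalue P 1"
proof -
  have P: "P \<in> carrier_mat n n" using st unfolding row_stochastic_def by auto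
  let ?v = "vec n (\<lambda>_. 1::real)"
  have "P *\<^sub>v ?v = 1 \<cdot>\<^sub>v ?v"
    using st P unfolding row_stochastic_def by (intro eq_vecI) (simp_all add: scalar_prod_def atLeast0LessThan)
  moreover have "?v \<noteq> 0\<^sub>v n" using n by (metis index_vec index_zero_vec(1) zero_neq_one)
  ultimately have "eigenvector P ?v 1" unfolding eigenvector_def using P by auto
  then show ?thesis unfolding eigenvalue_def by blast
qed

text \<open>A reversible matrix has no Jordan chain \<open>P y = y + c x\<close> over a fixed vector \<open>x \<noteq> 0\<close>:
  pair the chain equation with \<open>x\<close> in \<open>\<langle>\<cdot>,\<cdot>\<rangle>\<^sub>\<pi>\<close>.\<close>

lemma reversible_no_Jordan_chain:
  fixes x y :: "nat \<Rightarrow> real"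
  assumes rev: "reversible n P \<pi>" and pos: "\<forall>i<n. \<pi> i > 0"
    and x: "harmonic n P x" "i0 < n" "x i0 \<noteq> 0"
    and chain: "\<forall>i<n. (\<Sum>j<n. P $$ (i,j) * y j) = y i + c * x i"
  shows "c = 0"
proof -
  have "(\<Sum>i<n. \<pi> i * x i * (\<Sum>j<n. P $$ (i,j) * y j))
      = (\<Sum>i<n. \<pi> i * y i * (\<Sum>j<n. P $$ (i,j) * x j))"
    using reversible_sum_symmetric[OF rev, of x y] by simp
  moreover have "(\<Sum>i<n. \<pi> i * x i * (\<Sum>j<n. P $$ (i,j) * y j))
      = (\<Sum>i<n. \<pi> i * x i * y i) + c * (\<Sum>i<n. \<pi> i * x i * x i)"
    using chain by (simp add: algebra_simps sum.distrib sum_distrib_left)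
  moreover have "(\<Sum>i<n. \<pi> i * y i * (\<Sum>j<n. P $$ (i,j) * x j)) = (\<Sum>i<n. \<pi> i * x i * y i)"
    using x(1) unfolding harmonic_def by (intro sum.cong refl) (simp add: mult_ac)
  moreover have "(\<Sum>i<n. \<pi> i * x i * x i) > 0"
  proof (rule sum_pos2[of "{..<n}" i0])
    show "0 < \<pi> i0 * x i0 * x i0"
      using pos x(2,3) by (metis mult.assoc mult_pos_pos not_real_square_gt_zero)
    show "0 \<le> \<pi> i * x i * x i" if "i \<in> {..<n}" for i
      using pos that by (metis lessThan_iff less_eq_real_def mult.assoc mult_nonneg_nonneg zero_le_square)
  qed (use x(2) in auto)
  ultimately show ?thesis by simp
qed

text \<open>If the root \<open>1\<close> were double, a Schur form \<open>P W = W T\<close> with \<open>T\<^sub>0\<^sub>0 = T\<^sub>1\<^sub>1 = 1\<close>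
  would make the first column of \<open>W\<close> harmonic and the second a Jordan chain over it;
  reversibility kills the chain, so both columns are harmonic, hence constant, which
  contradicts the invertibility of \<open>W\<close>.\<close>

lemma primitive_reversible_root_one_simple:
  assumes st: "row_stochastic n P" and pr: "primitive_mat n P" and rev: "reversible n P \<pi>"
    and pos: "\<forall>i<n. \<pi> i > 0" and cp: "char_poly P = (\<Prod>r\<leftarrow>rs. [:-r,1:])"
  shows "count (mset rs) 1 \<le> 1"
proof (rule ccontr)
  assume "\<not> count (mset rs) 1 \<le> 1"
  then obtain xs where mset_xs: "mset (1 # 1 # xs) = mset rs"
    using mset_obtain_two_copies[of rs 1] by force
  have P: "P \<in> carrier_mat n n" using st unfolding row_stochastic_def by auto
  have cp': "char_poly P = (\<Prod>r\<leftarrow>1 # 1 # xs. [:-r,1:])"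
    unfolding cp prod_mset_prod_list[symmetric] mset_map mset_xs ..
  obtain T W W' where w: "similar_mat_wit P T W W'" and ut: "upper_triangular T"
    and dg: "diag_mat T = 1 # 1 # xs" by (rule schur_triangularization[OF P cp'])
  from similar_mat_witD2[OF P w] have T: "T \<in> carrier_mat n n" and W: "W \<in> carrier_mat n n"
    and W': "W' \<in> carrier_mat n n" and inv: "W' * W = 1\<^sub>m n" and "P = W * T * W'" by auto
  have n: "1 < n" using arg_cong[OF dg, of length] T by (simp add: diag_mat_def)
  have T11: "T $$ (0,0) = 1" "T $$ (1,1) = 1"
    using arg_cong[OF dg, of "\<lambda>l. l ! 0"] arg_cong[OF dg, of "\<lambda>l. l ! 1"] T n
    by (simp_all add: diag_mat_def)
  have n0: "0 < n" using n by simp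
  have "P * W = W * T * (W' * W)"
    using \<open>P = W * T * W'\<close> W T W' by (simp add: assoc_mult_mat[of _ n n _ n _ n])
  then have PW: "P * W = W * T" using inv W T by simp
  define x where "x = (\<lambda>i. W $$ (i,0))"
  define y where "y = (\<lambda>i. W $$ (i,1))"
  have col: "(\<Sum>j<n. P $$ (i,j) * W $$ (j,c)) = (\<Sum>l\<le>c. W $$ (i,l) * T $$ (l,c))"
    if "i < n" "c < n" for i c
    using arg_cong[OF PW, of "\<lambda>M. M $$ (i,c)"] index_mult_mat_sum[OF P W that]
      index_mult_mat_sum[OF W T that] upper_triangular_column_sum[OF T ut that(2)] by simp
  have hx: "harmonic n P x"
    unfolding harmonic_def x_def using col[of _ 0] T11 n by simp
  have cx: "\<forall>l<n. W $$ (l,0) = x 0"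
    using primitive_harmonic_const[OF st pr hx _ n0] unfolding x_def by blast
  obtain l0 where l0: "l0 < n" "x l0 \<noteq> 0"
    using left_inverse_nonzero_column[OF W W' inv n0] unfolding x_def by blast
  have chain: "\<forall>i<n. (\<Sum>j<n. P $$ (i,j) * y j) = y i + T $$ (0,1) * x i"
    unfolding x_def y_def using col[of _ 1] T11 n by simp
  have "T $$ (0,1) = 0" using reversible_no_Jordan_chain[OF rev pos hx l0 chain] .
  then have hy: "harmonic n P y" using chain unfolding harmonic_def by simp
  have cy: "\<forall>l<n. W $$ (l,1) = y 0"
    using primitive_harmonic_const[OF st pr hy _ n0] unfolding y_def by blast
  show False using left_inverse_const_columns[OF W W' inv _ _ _ cx cy] n by simp
qed

subsection \<open>The dilation of a reversible matrix\<close>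

lemma reversible_power:
  assumes P: "P \<in> carrier_mat n n" and rev: "reversible n P \<pi>"
  shows "reversible n (P ^\<^sub>m k) \<pi>"
proof (induction k)
  case 0
  then show ?case using P unfolding reversible_def by auto
next
  case (Suc k)
  let ?K = "P ^\<^sub>m k"
  have K: "?K \<in> carrier_mat n n" using P by simp
  show ?case unfolding reversible_def
  proof (intro allI impI)
    fix i j assume i: "i < n" and j: "j < n"
    have "\<pi> i * (?K * P) $$ (i,j) = (\<Sum>l<n. (\<pi> i * ?K $$ (i,l)) * P $$ (l,j))"
      by (simp add: index_mult_mat_sum[OF K P i j] sum_distrib_left mult.assoc)
    also have "\<dots> = (\<Sum>l<n. (\<pi> j * P $$ (j,l)) * ?K $$ (l,i))"
      using Suc rev i j unfolding reversible_def by (intro sum.cong refl) (simp add: mult_ac)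
    also have "\<dots> = \<pi> j * (P * ?K) $$ (j,i)"
      by (simp add: index_mult_mat_sum[OF P K j i] sum_distrib_left mult_ac)
    also have "P * ?K = ?K * P" using pow_mat_Suc_left[OF P] by simp
    finally show "\<pi> i * (P ^\<^sub>m Suc k) $$ (i,j) = \<pi> j * (P ^\<^sub>m Suc k) $$ (j,i)" by simp
  qed
qed

lemma time_reversal_reversible:
  assumes Q: "Q \<in> carrier_mat n n" and rev: "reversible n Q \<pi>" and pos: "\<forall>i<n. \<pi> i > 0"
  shows "time_reversal n \<pi> Q = Q"
proof (rule eq_matI)
  fix i j assume i: "i < dim_row Q" and j: "j < dim_col Q"
  then have "\<pi> j * Q $$ (j,i) = \<pi> i * Q $$ (i,j)" using rev Q unfolding reversible_def by auto
  then show "time_reversal n \<pi> Q $$ (i,j) = Q $$ (i,j)"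
    using i j Q pos unfolding time_reversal_def by auto
qed (use Q in \<open>auto simp: time_reversal_def\<close>)

text \<open>\<open>R = [[I, I], [I, -I]]\<close> conjugates \<open>diag(Q, -Q)\<close> into the antidiagonal block matrix,
  with \<open>R\<^sup>-\<^sup>1 = R/2\<close>.\<close>

lemma antidiagonal_block_similar:
  fixes Q :: "'a::field_char_0 mat"
  assumes Q: "Q \<in> carrier_mat n n"
  shows "similar_mat (four_block_mat (0\<^sub>m n n) Q Q (0\<^sub>m n n))
                     (four_block_mat Q (0\<^sub>m n n) (0\<^sub>m n n) ((-1) \<cdot>\<^sub>m Q))"
proof -
  define I where "I = (1\<^sub>m n :: 'a mat)"
  define R where "R = four_block_mat I I I ((-1) \<cdot>\<^sub>m I)"
  define R' where "R' = four_block_mat ((1/2) \<cdot>\<^sub>m I) ((1/2) \<cdot>\<^sub>m I) ((1/2) \<cdot>\<^sub>m I) ((-1/2) \<cdot>\<^sub>m I)"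
  define D where "D = four_block_mat Q (0\<^sub>m n n) (0\<^sub>m n n) ((-1) \<cdot>\<^sub>m Q)"
  have I: "I \<in> carrier_mat n n" unfolding I_def by simp
  have c: "R \<in> carrier_mat (n+n) (n+n)" "R' \<in> carrier_mat (n+n) (n+n)" "D \<in> carrier_mat (n+n) (n+n)"
    unfolding R_def R'_def D_def using I Q by auto
  have mI: "(-1) \<cdot>\<^sub>m I \<in> carrier_mat n n" "(1/2) \<cdot>\<^sub>m I \<in> carrier_mat n n"
    "(-1/2) \<cdot>\<^sub>m I \<in> carrier_mat n n" "(-1) \<cdot>\<^sub>m Q \<in> carrier_mat n n" "0\<^sub>m n n \<in> carrier_mat n n"
    using I Q by auto
  have "R * R' = 1\<^sub>m (n+n)"
    unfolding R_def R'_def four_block_one_mat[symmetric]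
      mult_four_block_mat[OF I I I mI(1) mI(2) mI(2) mI(2) mI(3)]
    by (intro cong_four_block_mat eq_matI) (simp_all add: I_def)
  moreover have "R' * R = 1\<^sub>m (n+n)"
    unfolding R_def R'_def four_block_one_mat[symmetric]
      mult_four_block_mat[OF mI(2) mI(2) mI(2) mI(3) I I I mI(1)]
    by (intro cong_four_block_mat eq_matI) (simp_all add: I_def)
  moreover have "four_block_mat (0\<^sub>m n n) Q Q (0\<^sub>m n n) = R * D * R'"
  proof -
    have RD: "R * D = four_block_mat Q ((-1) \<cdot>\<^sub>m Q) Q Q"
      unfolding R_def D_def mult_four_block_mat[OF I I I mI(1) Q mI(5) mI(5) mI(4)]
      using Q by (intro cong_four_block_mat) (auto simp: I_def)
    show ?thesis
      unfolding RD R'_def mult_four_block_mat[OF Q mI(4) Q Q mI(2) mI(2) mI(2) mI(3)]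
      by (intro cong_four_block_mat eq_matI) (use Q in \<open>simp_all add: I_def\<close>)
  qed
  ultimately have "similar_mat_wit (four_block_mat (0\<^sub>m n n) Q Q (0\<^sub>m n n)) D R R'"
    using Q c by (intro similar_mat_witI) auto
  then show ?thesis unfolding D_def similar_mat_def by blast
qed

lemma char_poly_antidiagonal_block:
  fixes Q :: "'a::{conjugatable_ordered_field, field_char_0} mat"
  assumes Q: "Q \<in> carrier_mat n n" and cp: "char_poly Q = (\<Prod>q\<leftarrow>qs. [:-q,1:])"
  shows "char_poly (four_block_mat (0\<^sub>m n n) Q Q (0\<^sub>m n n))
       = (\<Prod>q\<leftarrow>qs. [:-q,1:]) * (\<Prod>q\<leftarrow>qs. [:q,1:])"
proof -
  obtain T W W' where w: "similar_mat_wit Q T W W'" and ut: "upper_triangular T"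
    and dg: "diag_mat T = qs" by (rule schur_triangularization[OF Q cp])
  have T: "T \<in> carrier_mat n n" using similar_mat_witD2[OF Q w] by auto
  have sim: "similar_mat Q T" using w unfolding similar_mat_def by blast
  let ?B = "four_block_mat T (0\<^sub>m n n) (0\<^sub>m n n) ((-1) \<cdot>\<^sub>m T)"
  have "similar_mat (four_block_mat Q (0\<^sub>m n n) (0\<^sub>m n n) ((-1) \<cdot>\<^sub>m Q)) ?B"
    by (rule similar_mat_four_block_0_0[OF sim similar_mat_smult[OF sim] Q]) (use Q in simp)
  then have "char_poly (four_block_mat (0\<^sub>m n n) Q Q (0\<^sub>m n n)) = char_poly ?B"
    by (intro char_poly_similar similar_mat_trans[OF antidiagonal_block_similar[OF Q]])
  also have "\<dots> = (\<Prod>a\<leftarrow>diag_mat ?B. [:-a,1:])"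
  proof (intro char_poly_upper_triangular upper_triangular_four_block[OF T _ ut])
    show "upper_triangular ((-1) \<cdot>\<^sub>m T)" using ut T by (intro upper_triangularI) auto
  qed (use T in auto)
  also have "diag_mat ?B = qs @ map uminus qs"
    using T dg by (subst diag_four_block_mat[OF T]) (auto simp: diag_mat_def intro!: nth_equalityI)
  finally show ?thesis by (simp add: o_def)
qed

lemma sorted_list_of_multiset_second_largest:
  fixes R :: "'a::linorder multiset"
  assumes ne: "R \<noteq> {#}" and le: "\<forall>x\<in>#R. x \<le> a"
  shows "rev (sorted_list_of_multiset (add_mset a R)) ! 1 = Max (set_mset R)"
proof -
  define xs where "xs = sorted_list_of_multiset R"
  have sorted: "sorted xs" and set_xs: "set xs = set_mset R" unfolding xs_def by auto
  have "xs \<noteq> []" using ne set_xs by auto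
  have "sorted_list_of_multiset (add_mset a R) = xs @ [a]"
    unfolding sorted_list_of_multiset_insert xs_def[symmetric]
    by (rule sorted_insort_is_snoc[OF sorted]) (use le set_xs in auto)
  then have "rev (sorted_list_of_multiset (add_mset a R)) ! 1 = last xs"
    using \<open>xs \<noteq> []\<close> by (simp add: last_conv_nth rev_nth nth_append)
  also have "last xs = Max (set xs)"
  proof (rule Max_eqI[symmetric])
    fix y assume "y \<in> set xs"
    then obtain i where "i < length xs" "y = xs ! i" by (auto simp: in_set_conv_nth)
    then show "y \<le> last xs" using sorted \<open>xs \<noteq> []\<close> by (simp add: last_conv_nth sorted_iff_nth_mono)
  qed (use \<open>xs \<noteq> []\<close> in auto)
  finally show ?thesis using set_xs by simp
qed

lemma Max_insert_symmetric:
  fixes S :: "'a::linordered_idom set"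
  assumes "finite S" "S \<noteq> {}" "c \<le> 0"
  shows "Max (insert c (S \<union> uminus ` S)) = Max (abs ` S)"
proof (rule Max_eqI)
  have le_Max: "\<bar>s\<bar> \<le> Max (abs ` S)" if "s \<in> S" for s using assms that by auto
  show "x \<le> Max (abs ` S)" if "x \<in> insert c (S \<union> uminus ` S)" for x
    using that assms(2,3) le_Max abs_ge_self abs_ge_minus_self
    by (fastforce intro: order_trans[OF _ le_Max])
  have "Max (abs ` S) \<in> abs ` S" using assms by (intro Max_in) auto
  then obtain s where "s \<in> S" "\<bar>s\<bar> = Max (abs ` S)" by auto
  then show "Max (abs ` S) \<in> insert c (S \<union> uminus ` S)"
    by (cases "s \<ge> 0") (auto simp: image_iff intro: bexI[of _ s])
qed (use assms in auto)

lemma Max_abs_power: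
  fixes S :: "'a::linordered_idom set"
  assumes "finite S" "S \<noteq> {}"
  shows "Max (abs ` (\<lambda>a. a ^ k) ` S) = Max (abs ` S) ^ k"
proof (rule Max_eqI)
  show "x \<le> Max (abs ` S) ^ k" if "x \<in> abs ` (\<lambda>a. a ^ k) ` S" for x
    using that assms by (auto simp: power_abs intro!: power_mono)
  have "Max (abs ` S) \<in> abs ` S" using assms by (intro Max_in) auto
  then obtain s where "s \<in> S" "\<bar>s\<bar> = Max (abs ` S)" by auto
  then have "Max (abs ` S) ^ k = \<bar>s ^ k\<bar>" by (simp add: power_abs)
  then show "Max (abs ` S) ^ k \<in> abs ` (\<lambda>a. a ^ k) ` S" using \<open>s \<in> S\<close> by blast
qed (use assms in auto)

text \<open>The dilation of a reversible \<open>Q\<close> has the eigenvalues \<open>\<plusminus>q\<close> for the eigenvalues \<open>q\<close>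
  of \<open>Q\<close>; after the top eigenvalue \<open>1\<close> the largest of them is \<open>max |A|\<close>.\<close>

lemma gamma_ddagger_reversible:
  assumes Q: "Q \<in> carrier_mat n n" and rev: "reversible n Q \<pi>" and pos: "\<forall>i<n. \<pi> i > 0"
    and cp: "char_poly Q = (\<Prod>q\<leftarrow>qs. [:-q,1:])" and qs: "mset qs = add_mset 1 A"
    and A: "A \<noteq> {#}" "\<forall>a\<in>#A. \<bar>a\<bar> \<le> 1"
  shows "gamma_ddagger n \<pi> Q = 1 - Max (abs ` set_mset A)"
proof -
  have "dilation n \<pi> Q = four_block_mat (0\<^sub>m n n) Q Q (0\<^sub>m n n)"
    unfolding dilation_def time_reversal_reversible[OF Q rev pos] ..
  moreover have "(\<Prod>q\<leftarrow>qs. [:-q,1:]) \<noteq> 0" "(\<Prod>q\<leftarrow>qs. [:q,1:]) \<noteq> (0 :: real poly)"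
    by (auto simp: prod_list_zero_iff)
  moreover have "proots (\<Prod>q\<leftarrow>qs. [:q,1:]) = mset (map uminus qs)"
    using proots_prod_linear[of "map uminus qs"] by (simp add: o_def)
  ultimately have "proots (char_poly (dilation n \<pi> Q)) = mset qs + mset (map uminus qs)"
    by (simp add: char_poly_antidiagonal_block[OF Q cp] proots_mult proots_prod_linear
        del: mult_pCons_left)
  also have "\<dots> = add_mset 1 (add_mset (-1) (A + image_mset uminus A))"
    by (simp add: qs)
  finally have roots: "proots (char_poly (dilation n \<pi> Q))
      = add_mset 1 (add_mset (-1) (A + image_mset uminus A))" .
  have "second_eigenvalue (dilation n \<pi> Q) = Max (set_mset (add_mset (-1) (A + image_mset uminus A)))"
    unfolding second_eigenvalue_def eigenvalues_desc_def roots
    using A by (intro sorted_list_of_multiset_second_largest) (auto simp: abs_le_iff)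
  also have "\<dots> = Max (abs ` set_mset A)" using A Max_insert_symmetric[of "set_mset A" "-1"] by simp
  finally show ?thesis unfolding gamma_ddagger_def by simp
qed

lemma abs_spectral_gap_eq:
  assumes P: "P \<in> carrier_mat n n" and cp: "char_poly P = (\<Prod>r\<leftarrow>rs. [:-r,1:])"
    and rs: "mset rs = add_mset 1 M" and one: "1 \<notin># M"
  shows "abs_spectral_gap P = 1 - Max (abs ` set_mset M)"
proof -
  have spec: "spec P = complex_of_real ` insert 1 (set_mset M)"
    unfolding spec_eq_roots[OF P cp] using arg_cong[OF rs, of set_mset] by simp
  have "{cmod z |z. z \<in> spec P \<and> z \<noteq> 1} = abs ` set_mset M"
  proof (intro equalityI subsetI)
    fix w assume "w \<in> {cmod z |z. z \<in> spec P \<and> z \<noteq> 1}"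
    then obtain x where "x \<in> insert 1 (set_mset M)" "complex_of_real x \<noteq> 1" "w = \<bar>x\<bar>"
      unfolding spec by force
    then show "w \<in> abs ` set_mset M" by auto
  next
    fix w assume "w \<in> abs ` set_mset M"
    then obtain x where x: "x \<in># M" "w = \<bar>x\<bar>" by auto
    then have "complex_of_real x \<in> spec P" "complex_of_real x \<noteq> 1"
      using one unfolding spec by auto
    then show "w \<in> {cmod z |z. z \<in> spec P \<and> z \<noteq> 1}" using x by force
  qed
  then show ?thesis unfolding abs_spectral_gap_def by simp
qed

lemma SUP_one_minus_power_div:
  fixes r :: real
  assumes "0 \<le> r" "r \<le> 1"
  shows "(SUP k\<in>{1..}. (1 - r ^ k) / real k) = 1 - r"
proof (rule cSup_eq_maximum)
  show "1 - r \<in> (\<lambda>k. (1 - r ^ k) / real k) ` {1..}" by (rule image_eqI[of _ _ 1]) auto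
  fix y assume "y \<in> (\<lambda>k. (1 - r ^ k) / real k) ` {1..}"
  then obtain k where k: "k \<ge> 1" "y = (1 - r ^ k) / real k" by auto
  have "1 + real k * (r - 1) \<le> (1 + (r - 1)) ^ k"
    by (rule Bernoulli_inequality) (use assms in simp)
  then have "1 - r ^ k \<le> real k * (1 - r)" by (simp add: algebra_simps)
  then show "y \<le> 1 - r" using k by (simp add: divide_le_eq mult.commute)
qed

lemma ergodic_reversible_eigenvalues:
  assumes n: "n \<ge> 2" and st: "row_stochastic n P" and pr: "primitive_mat n P"
    and pos: "\<forall>i<n. \<pi> i > 0" and rev: "reversible n P \<pi>"
  obtains rs M where "char_poly P = (\<Prod>r\<leftarrow>rs. [:-r,1:])" "mset rs = add_mset 1 M"
    "1 \<notin># M" "M \<noteq> {#}" "\<forall>a\<in>#M. \<bar>a\<bar> \<le> 1"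
proof -
  have P: "P \<in> carrier_mat n n" using st unfolding row_stochastic_def by auto
  obtain rs where cp: "char_poly P = (\<Prod>r\<leftarrow>rs. [:-r,1:])" and "length rs = n"
    by (rule reversible_char_poly_splits[OF rev pos P])
  define M where "M = mset rs - {#1#}"
  have "1 \<in> set rs"
    using stochastic_eigenvalue_one[OF st] n eigenvalue_iff_mem_roots[OF P cp] by simp
  then have rs: "mset rs = add_mset 1 M" unfolding M_def by simp
  moreover have "1 \<notin># M"
    using primitive_reversible_root_one_simple[OF st pr rev pos cp] unfolding M_def
    by (simp add: count_eq_zero_iff[symmetric])
  moreover have "M \<noteq> {#}" using arg_cong[OF rs, of size] \<open>length rs = n\<close> n by auto
  moreover have "\<forall>a\<in>#M. \<bar>a\<bar> \<le> 1"
    using arg_cong[OF rs, of set_mset] stochastic_eigenvalue_abs_le_1[OF st]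
      eigenvalue_iff_mem_roots[OF P cp] by auto
  ultimately show ?thesis using cp that by blast
qed

theorem mainTheorem15:
  fixes n :: nat and P :: "real mat" and \<pi> :: "nat \<Rightarrow> real"
  assumes "n \<ge> 2"
    and "row_stochastic n P"
    and "primitive_mat n P"
    and "stationary_dist n P \<pi>"
    and "\<forall>i<n. \<pi> i > 0"
    and "reversible n P \<pi>"
  shows "gamma_dps n \<pi> P = abs_spectral_gap P"
proof -
  note st = assms(2) and pos = assms(5) and rev = assms(6)
  have P: "P \<in> carrier_mat n n" using st unfolding row_stochastic_def by auto
  obtain rs M where cp: "char_poly P = (\<Prod>r\<leftarrow>rs. [:-r,1:])" and rs: "mset rs = add_mset 1 M"
    and "1 \<notin># M" "M \<noteq> {#}" and bound: "\<forall>a\<in>#M. \<bar>a\<bar> \<le> 1"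
    by (rule ergodic_reversible_eigenvalues[OF assms(1-3,5,6)])
  define r where "r = Max (abs ` set_mset M)"
  have r: "0 \<le> r" "r \<le> 1" using \<open>M \<noteq> {#}\<close> bound unfolding r_def by (auto simp: Max_ge_iff)
  have "gamma_ddagger n \<pi> (P ^\<^sub>m k) = 1 - r ^ k" for k
    using gamma_ddagger_reversible[OF _ reversible_power[OF P rev, of k] pos
        char_poly_power[OF P cp, of k], where A = "image_mset (\<lambda>a. a ^ k) M"]
      \<open>M \<noteq> {#}\<close> bound rs Max_abs_power[of "set_mset M" k] P
    by (simp add: r_def power_abs power_le_one)
  then have "gamma_dps n \<pi> P = (SUP k\<in>{1..}. (1 - r ^ k) / real k)"
    unfolding gamma_dps_def by simp
  also have "\<dots> = 1 - r" by (rule SUP_one_minus_power_div[OF r])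
  also have "\<dots> = abs_spectral_gap P"
    unfolding abs_spectral_gap_eq[OF P cp rs \<open>1 \<notin># M\<close>] r_def ..
  finally show ?thesis .
qed

end
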